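(* Let $r:\mathfrak h^*\to\wedge^2\mathfrak g$ be a triangular dynamical $r$-matrix. The following are equivalent: (1) $\mathfrak g_\lambda=\mathfrak g$ for some $\lambda\in\mathfrak h^*$ (i.e. $\mathrm{rank}\,r=\dim\mathfrak g-\dim\mathfrak h$, and $r$ is called non-degenerate); (2) the bundle map $\Lambda^\#:A^*\to A$ is an isomorphism at every point; (3) $\mathfrak g_\lambda=\mathfrak g$ for all $\lambda\in\mathfrak h^*$; (4) $(M,\pi)$ is a symplectic manifold.
   Context: Let $\mathfrak g$ be a finite-dimensional real Lie algebra and $\mathfrak h\subset\mathfrak g$ an abelian Lie subalgebra of dimension $l$ with basis $h_1,\dots,h_l$; $(\lambda^1,\dots,\lambda^l)$ are the induced coordinates on $\mathfrak h^*$. A triangular dynamical $r$-matrix is a smooth map $r:\mathfrak h^*\to\wedge^2\mathfrak g$ with $[h,r(\lambda)]=0$ for $h\in\mathfrak h$ and $\sum_i h_i\wedge\frac{\partial r}{\partial\lambda^i}+\frac12[r,r]=0$ (Schouten-type bracket on $\wedge^\bullet\mathfrak g$). For $\rho\in\wedge^2\mathfrak g$, $\rho^\#:\mathfrak g^*\to\mathfrak g$ is $\langle\rho^\#\xi,\eta\rangle=\rho(\xi,\eta)$; $\mathfrak h^\perp\subset\mathfrak g^*$ is the annihilator of $\mathfrak h$; $\mathfrak g_\lambda=\mathfrak h+r(\lambda)^\#\mathfrak h^\perp$ and $\mathrm{rank}\,r=\dim\mathfrak g_\lambda-\dim\mathfrak h$. $A=T\mathfrak h^*\times\mathfrak g$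 is the vector bundle over $\mathfrak h^*$ with fiber $A_\lambda\cong\mathfrak h^*\oplus\mathfrak g$, so $A_\lambda^*\cong\mathfrak h\oplus\mathfrak g^*$; $\Lambda^\#:A^*\to A$ is given at $\lambda$ by $\Lambda^\#_\lambda(h,\xi)=(i^*\xi,\,-h+r(\lambda)^\#\xi)$, where $i^*:\mathfrak g^*\to\mathfrak h^*$ is restriction. $G$ is a connected Lie group with Lie algebra $\mathfrak g$, $M=\mathfrak h^*\times G$, $\pi=\sum_i\vec{h_i}\wedge\frac{\partial}{\partial\lambda^i}+\vec{r(\lambda)}$, where $\vec u$ is the left-invariant vector/multivector field along the $G$-factor generated by $u$. *)

theory Defs
  imports "HOL-Analysis.Analysis"
begin

text \<open>The Lie algebra g is real^'n (basis e_a = axis a 1, dual basis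
identified with real^'n via the dot product), with bracket br. The abelian
subalgebra h has basis hb :: 'l \<Rightarrow> real^'n, so dim h = CARD('l); a point
lambda of h* is given by its coordinates (lambda^i = lambda(h_i)) in real^'l,
and an element of h by its coefficient vector c in real^'l (meaning sum_i c_i h_i).\<close>

definition lie_algebra :: "(real^'n \<Rightarrow> real^'n \<Rightarrow> real^'n) \<Rightarrow> bool" where
  "lie_algebra br \<longleftrightarrow> bilinear br \<and> (\<forall>x. br x x = 0) \<and>
     (\<forall>x y z. br x (br y z) + br y (br z x) + br z (br x y) = 0)"

definition abelian_subalg_basis ::
  "(real^'n \<Rightarrow> real^'n \<Rightarrow> real^'n) \<Rightarrow> ('l::finite \<Rightarrow> real^'n) \<Rightarrow> bool" where
  "abelian_subalg_basis br hb \<longleftrightarrow> inj hb \<and> independent (range hb) \<and>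
     (\<forall>x\<in>span (range hb). \<forall>y\<in>span (range hb). br x y = 0)"

text \<open>Smooth (C-infinity) maps between finite-dimensional spaces: all iterated
partial derivatives exist, are continuous, and the maps are differentiable.\<close>
definition smooth_map :: "(real^'l::finite \<Rightarrow> 'b::real_normed_vector) \<Rightarrow> bool" where
  "smooth_map f \<longleftrightarrow> (\<exists>F :: 'l list \<Rightarrow> real^'l \<Rightarrow> 'b. F [] = f \<and>
     (\<forall>ks. continuous_on UNIV (F ks)) \<and>
     (\<forall>ks x. (F ks has_derivative (\<lambda>v. \<Sum>i\<in>UNIV. (v $ i) *\<^sub>R F (i # ks) x)) (at x)))"

text \<open>A bivector rho in wedge^2 g is an antisymmetric matrix, rho = 1/2 sum rho_ab e_a wedge e_b,
viewed as the bilinear form rho(xi,eta) = sum rho_ab xi_a eta_b on g*.\<close>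
definition is_bivector :: "real^'n^'n \<Rightarrow> bool" where
  "is_bivector \<rho> \<longleftrightarrow> transpose \<rho> = - \<rho>"

definition biv_eval :: "real^'n^'n \<Rightarrow> real^'n \<Rightarrow> real^'n \<Rightarrow> real" where
  "biv_eval \<rho> \<xi> \<eta> = (\<Sum>a\<in>UNIV. \<Sum>b\<in>UNIV. \<rho>$a$b * \<xi>$a * \<eta>$b)"

text \<open>rho^# : g* \<rightarrow> g, <rho^# xi, eta> = rho(xi, eta).\<close>
definition sharp :: "real^'n^'n \<Rightarrow> real^'n \<Rightarrow> real^'n" where
  "sharp \<rho> \<xi> = transpose \<rho> *v \<xi>"

text \<open>Adjoint action [h, rho] of g on wedge^2 g (derivation extension).\<close>
definition ad_biv :: "(real^'n \<Rightarrow> real^'n \<Rightarrow> real^'n) \<Rightarrow> real^'n \<Rightarrow> real^'n^'n \<Rightarrow> real^'n^'n" where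
  "ad_biv br h \<rho> = (\<chi> p q. (\<Sum>a\<in>UNIV. \<rho>$a$q * (br h (axis a 1))$p)
                         + (\<Sum>b\<in>UNIV. \<rho>$p$b * (br h (axis b 1))$q))"

text \<open>Trivectors are represented as alternating trilinear forms on g*;
x wedge y wedge z evaluated on (xi,eta,zeta) is the determinant.\<close>
definition w3 :: "real^'n \<Rightarrow> real^'n \<Rightarrow> real^'n \<Rightarrow> real^'n \<Rightarrow> real^'n \<Rightarrow> real^'n \<Rightarrow> real" where
  "w3 x y z \<xi> \<eta> \<zeta> =
     (\<xi> \<bullet> x) * ((\<eta> \<bullet> y) * (\<zeta> \<bullet> z) - (\<eta> \<bullet> z) * (\<zeta> \<bullet> y))
   - (\<xi> \<bullet> y) * ((\<eta> \<bullet> x) * (\<zeta> \<bullet> z) - (\<eta> \<bullet> z) * (\<zeta> \<bullet> x))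
   + (\<xi> \<bullet> z) * ((\<eta> \<bullet> x) * (\<zeta> \<bullet> y) - (\<eta> \<bullet> y) * (\<zeta> \<bullet> x))"

text \<open>Schouten bracket of bivectors, extended bilinearly from
[a wedge b, c wedge d] = [a,c] wedge b wedge d - [a,d] wedge b wedge c
                        - [b,c] wedge a wedge d + [b,d] wedge a wedge c.\<close>
definition schouten2 ::
  "(real^'n \<Rightarrow> real^'n \<Rightarrow> real^'n) \<Rightarrow> real^'n^'n \<Rightarrow> real^'n^'n \<Rightarrow> real^'n \<Rightarrow> real^'n \<Rightarrow> real^'n \<Rightarrow> real" where
  "schouten2 br \<rho> \<sigma> \<xi> \<eta> \<zeta> = (\<Sum>a\<in>UNIV. \<Sum>b\<in>UNIV. \<Sum>c\<in>UNIV. \<Sum>d\<in>UNIV.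
     (1/4) * \<rho>$a$b * \<sigma>$c$d *
      ( w3 (br (axis a 1) (axis c 1)) (axis b 1) (axis d 1) \<xi> \<eta> \<zeta>
      - w3 (br (axis a 1) (axis d 1)) (axis b 1) (axis c 1) \<xi> \<eta> \<zeta>
      - w3 (br (axis b 1) (axis c 1)) (axis a 1) (axis d 1) \<xi> \<eta> \<zeta>
      + w3 (br (axis b 1) (axis d 1)) (axis a 1) (axis c 1) \<xi> \<eta> \<zeta>))"

text \<open>sum_i h_i wedge (d r / d lambda^i) at lambda, as a trilinear form.\<close>
definition dyn_term ::
  "('l::finite \<Rightarrow> real^'n) \<Rightarrow> (real^'l \<Rightarrow> real^'n^'n) \<Rightarrow> real^'l \<Rightarrow> real^'n \<Rightarrow> real^'n \<Rightarrow> real^'n \<Rightarrow> real" where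
  "dyn_term hb r lam \<xi> \<eta> \<zeta> = (\<Sum>i\<in>UNIV. \<Sum>a\<in>UNIV. \<Sum>b\<in>UNIV.
     (1/2) * (frechet_derivative r (at lam) (axis i 1))$a$b * w3 (hb i) (axis a 1) (axis b 1) \<xi> \<eta> \<zeta>)"

definition triangular_dyn_rmatrix ::
  "(real^'n \<Rightarrow> real^'n \<Rightarrow> real^'n) \<Rightarrow> ('l::finite \<Rightarrow> real^'n) \<Rightarrow> (real^'l \<Rightarrow> real^'n^'n) \<Rightarrow> bool" where
  "triangular_dyn_rmatrix br hb r \<longleftrightarrow> smooth_map r \<and> (\<forall>lam. is_bivector (r lam)) \<and>
     (\<forall>lam. \<forall>h\<in>span (range hb). ad_biv br h (r lam) = 0) \<and>
     (\<forall>lam \<xi> \<eta> \<zeta>. dyn_term hb r lam \<xi> \<eta> \<zeta> + (1/2) * schouten2 br (r lam) (r lam) \<xi> \<eta> \<zeta> = 0)"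

definition h_perp :: "('l \<Rightarrow> real^'n) \<Rightarrow> (real^'n) set" where
  "h_perp hb = {\<xi>. \<forall>i. \<xi> \<bullet> hb i = 0}"

definition istar :: "('l::finite \<Rightarrow> real^'n) \<Rightarrow> real^'n \<Rightarrow> real^'l" where
  "istar hb \<xi> = (\<chi> i. \<xi> \<bullet> hb i)"

definition g_lambda :: "('l \<Rightarrow> real^'n) \<Rightarrow> (real^'l \<Rightarrow> real^'n^'n) \<Rightarrow> real^'l \<Rightarrow> (real^'n) set" where
  "g_lambda hb r lam = {x + y | x y. x \<in> span (range hb) \<and> y \<in> sharp (r lam) ` h_perp hb}"

text \<open>Lambda^# at lambda: A*_lambda = h (+) g* \<rightarrow> A_lambda = h* (+) g.\<close>
definition Lambda_sharp ::
  "('l::finite \<Rightarrow> real^'n) \<Rightarrow> (real^'l \<Rightarrow> real^'n^'n) \<Rightarrow> real^'l \<Rightarrow> (real^'l) \<times> (real^'n) \<Rightarrow> (real^'l) \<times> (real^'n)" where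
  "Lambda_sharp hb r lam = (\<lambda>(c, \<xi>). (istar hb \<xi>, - (\<Sum>i\<in>UNIV. c$i *\<^sub>R hb i) + sharp (r lam) \<xi>))"

text \<open>The bivector pi at a point (lambda, x) of M = h* x G, written in the
left-invariant trivialisation T*_(lambda,x) M = h (+) g* (it does not depend on x):
pi = sum_i h_i wedge d/d lambda^i + r(lambda).\<close>
definition pi_form ::
  "('l::finite \<Rightarrow> real^'n) \<Rightarrow> (real^'l \<Rightarrow> real^'n^'n) \<Rightarrow> real^'l \<Rightarrow> (real^'l) \<times> (real^'n) \<Rightarrow> (real^'l) \<times> (real^'n) \<Rightarrow> real" where
  "pi_form hb r lam \<alpha> \<beta> = (case \<alpha> of (c, \<xi>) \<Rightarrow> case \<beta> of (c', \<xi>') \<Rightarrow>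
     (\<Sum>i\<in>UNIV. (\<xi> \<bullet> hb i) * c'$i - c$i * (\<xi>' \<bullet> hb i)) + biv_eval (r lam) \<xi> \<xi>')"

definition symplectic_pi :: "('l::finite \<Rightarrow> real^'n) \<Rightarrow> (real^'l \<Rightarrow> real^'n^'n) \<Rightarrow> bool" where
  "symplectic_pi hb r \<longleftrightarrow> (\<forall>lam \<alpha>. (\<forall>\<beta>. pi_form hb r lam \<alpha> \<beta> = 0) \<longrightarrow> \<alpha> = 0)"

end

theory Submission
  imports Defs
begin

(* For fixed lambda, each of g_lambda = g, bijectivity of Lambda^#_lambda and nondegeneracy of pi
   over lambda is, by linear algebra, equivalent to nondegeneracy of r(lambda) on h^perp x h^perp.
   What remains is that this condition does not depend on lambda. Extend r(lambda) from h^perp to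
   a form N(lambda) on g* by the Gram form of h_1, ..., h_l on a complement of h^perp. Pairing the
   dynamical classical Yang-Baxter equation with a covector dual to a direction v and using the
   h-invariance of r gives d_v N = A^T N + N B with A, B continuous in lambda. By Jacobi's formula
   det N then solves a linear ODE along every line, so it vanishes everywhere or nowhere. *)

section \<open>Bivectors\<close>

lemma vec_eq_sum_axis: "(x::real^'n) = (\<Sum>a\<in>UNIV. x $ a *\<^sub>R axis a 1)"
  using basis_expansion[of x] by (simp add: scalar_mult_eq_scaleR)

lemma linear_eq_sum_axis:
  assumes "linear f"
  shows "f x = (\<Sum>a\<in>UNIV. x $ a *\<^sub>R f (axis a 1))"
  by (subst vec_eq_sum_axis[of x]) (simp add: linear_sum[OF assms] linear_scale[OF assms])

lemma linear_transpose: "linear (transpose :: real^'n^'m \<Rightarrow> real^'m^'n)"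
  by (rule linearI) (simp_all add: vec_eq_iff transpose_def)

lemma trace_transpose: "trace (transpose A) = trace (A::real^'m^'m)"
  unfolding trace_def transpose_def by simp

lemma trace_matrix: "trace (matrix f) = (\<Sum>a\<in>UNIV. f (axis a 1) $ a)"
  unfolding trace_def matrix_def by simp

lemma sharp_component: "sharp \<rho> \<xi> $ q = (\<Sum>p\<in>UNIV. \<rho>$p$q * \<xi>$p)"
  unfolding sharp_def by (simp add: matrix_vector_mult_def transpose_def mult.commute)

lemma sharp_inner: "sharp \<rho> \<xi> \<bullet> \<eta> = biv_eval \<rho> \<xi> \<eta>"
proof -
  have "sharp \<rho> \<xi> \<bullet> \<eta> = (\<Sum>b\<in>UNIV. \<Sum>a\<in>UNIV. \<rho>$a$b * \<xi>$a * \<eta>$b)"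
    by (simp add: inner_vec_def sharp_component sum_distrib_left mult_ac)
  also have "\<dots> = biv_eval \<rho> \<xi> \<eta>"
    unfolding biv_eval_def by (rule sum.swap)
  finally show ?thesis .
qed

lemma linear_sharp: "linear (sharp \<rho>)"
  unfolding sharp_def by (rule matrix_vector_mul_linear)

lemma sharp_add: "sharp \<rho> (x + y) = sharp \<rho> x + sharp \<rho> y"
  and sharp_scaleR: "sharp \<rho> (c *\<^sub>R x) = c *\<^sub>R sharp \<rho> x"
  and sharp_sum: "sharp \<rho> (sum f S) = (\<Sum>i\<in>S. sharp \<rho> (f i))"
  and sharp_minus: "sharp \<rho> (- x) = - sharp \<rho> x"
  and sharp_zero: "sharp \<rho> 0 = 0"
  using linear_sharp[of \<rho>] by (auto simp: linear_add linear_scale linear_sum linear_neg linear_0)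

lemma sharp_add_bivector: "sharp (\<rho> + \<sigma>) x = sharp \<rho> x + sharp \<sigma> x"
  by (simp add: vec_eq_iff sharp_component algebra_simps sum.distrib)

lemma sharp_scaleR_bivector: "sharp (c *\<^sub>R \<rho>) x = c *\<^sub>R sharp \<rho> x"
  by (simp add: vec_eq_iff sharp_component sum_distrib_left algebra_simps)

lemma linear_biv_eval: "linear (\<lambda>\<rho>. biv_eval \<rho> \<xi> \<eta>)"
  by (rule linearI) (simp_all add: biv_eval_def algebra_simps sum.distrib sum_distrib_left)

lemma bivector_mult_vector: "is_bivector \<rho> \<Longrightarrow> \<rho> *v x = - sharp \<rho> x"
  unfolding sharp_def is_bivector_def by (simp add: vec_eq_iff matrix_vector_mult_def sum_negf)

lemma inner_mult_vector: "\<xi> \<bullet> (\<rho> *v \<eta>) = biv_eval \<rho> \<xi> \<eta>"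
  by (simp add: inner_vec_def matrix_vector_mult_def biv_eval_def sum_distrib_left mult_ac)

lemma sharp_inner_antisym:
  assumes "is_bivector \<rho>"
  shows "sharp \<rho> \<xi> \<bullet> \<eta> = - (sharp \<rho> \<eta> \<bullet> \<xi>)"
proof -
  have "sharp \<rho> \<xi> \<bullet> \<eta> = \<xi> \<bullet> (\<rho> *v \<eta>)"
    by (simp add: sharp_inner inner_mult_vector)
  also have "\<dots> = - (sharp \<rho> \<eta> \<bullet> \<xi>)"
    by (simp add: bivector_mult_vector[OF assms] inner_commute)
  finally show ?thesis .
qed

definition ad_transpose :: "(real^'n \<Rightarrow> real^'n \<Rightarrow> real^'n) \<Rightarrow> real^'n \<Rightarrow> real^'n \<Rightarrow> real^'n" where
  "ad_transpose br x \<xi> = (\<chi> a. \<xi> \<bullet> br x (axis a 1))"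

lemma ad_transpose_inner:
  assumes "linear (br x)"
  shows "ad_transpose br x \<xi> \<bullet> y = \<xi> \<bullet> br x y"
proof -
  have "\<xi> \<bullet> br x y = (\<Sum>a\<in>UNIV. y $ a * (\<xi> \<bullet> br x (axis a 1)))"
    by (subst linear_eq_sum_axis[OF assms, of y]) (simp add: inner_sum_right)
  then show ?thesis
    by (simp add: ad_transpose_def inner_vec_def mult.commute)
qed

lemma sharp_ad_biv:
  assumes "linear (br h)"
  shows "sharp (ad_biv br h \<rho>) \<alpha> = sharp \<rho> (ad_transpose br h \<alpha>) + br h (sharp \<rho> \<alpha>)"
proof (subst vec_eq_iff, intro allI)
  fix q
  have transpose_part: "(\<Sum>p\<in>UNIV. (\<Sum>a\<in>UNIV. \<rho>$a$q * br h (axis a 1) $ p) * \<alpha>$p)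
      = sharp \<rho> (ad_transpose br h \<alpha>) $ q"
  proof -
    have "(\<Sum>p\<in>UNIV. (\<Sum>a\<in>UNIV. \<rho>$a$q * br h (axis a 1) $ p) * \<alpha>$p)
        = (\<Sum>p\<in>UNIV. \<Sum>a\<in>UNIV. \<rho>$a$q * (br h (axis a 1) $ p * \<alpha>$p))"
      by (simp add: sum_distrib_right mult.assoc)
    also have "\<dots> = (\<Sum>a\<in>UNIV. \<Sum>p\<in>UNIV. \<rho>$a$q * (br h (axis a 1) $ p * \<alpha>$p))"
      by (rule sum.swap)
    finally show ?thesis
      by (simp add: sharp_component ad_transpose_def inner_vec_def sum_distrib_left mult.commute)
  qed
  have br_part: "(\<Sum>p\<in>UNIV. (\<Sum>b\<in>UNIV. \<rho>$p$b * br h (axis b 1) $ q) * \<alpha>$p)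
      = br h (sharp \<rho> \<alpha>) $ q"
  proof -
    have "(\<Sum>p\<in>UNIV. (\<Sum>b\<in>UNIV. \<rho>$p$b * br h (axis b 1) $ q) * \<alpha>$p)
        = (\<Sum>p\<in>UNIV. \<Sum>b\<in>UNIV. (\<rho>$p$b * \<alpha>$p) * br h (axis b 1) $ q)"
      by (simp add: sum_distrib_left sum_distrib_right mult_ac)
    also have "\<dots> = (\<Sum>b\<in>UNIV. \<Sum>p\<in>UNIV. (\<rho>$p$b * \<alpha>$p) * br h (axis b 1) $ q)"
      by (rule sum.swap)
    finally show ?thesis
      by (subst (2) linear_eq_sum_axis[OF assms])
         (simp add: sharp_component sum_distrib_right)
  qed
  show "sharp (ad_biv br h \<rho>) \<alpha> $ q = (sharp \<rho> (ad_transpose br h \<alpha>) + br h (sharp \<rho> \<alpha>)) $ q"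
    unfolding sharp_component[of "ad_biv br h \<rho>"]
    by (simp add: ad_biv_def distrib_right sum.distrib transpose_part br_part)
qed

section \<open>The Schouten bracket of a bivector with itself\<close>

lemma w3_linear_2: "linear (\<lambda>y. w3 x y z \<xi> \<eta> \<zeta>)"
  by (rule linearI) (simp_all add: w3_def algebra_simps)

lemma w3_linear_3: "linear (\<lambda>z. w3 x y z \<xi> \<eta> \<zeta>)"
  by (rule linearI) (simp_all add: w3_def algebra_simps)

locale skew_bracket =
  fixes br :: "real^'n \<Rightarrow> real^'n \<Rightarrow> real^'n"
  assumes bilinear_br: "bilinear br"
    and br_self: "br x x = 0"
begin

lemma linear_br_right: "linear (br x)"
  using bilinear_br unfolding bilinear_def by blast

lemma linear_br_left: "linear (\<lambda>x. br x y)"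
  using bilinear_br unfolding bilinear_def by blast

lemma br_antisym: "br x y = - br y x"
proof -
  have "0 = br (x + y) (x + y)"
    by (simp add: br_self)
  also have "\<dots> = br x x + br x y + br y x + br y y"
    using linear_add[OF linear_br_right] linear_add[OF linear_br_left] by (simp add: algebra_simps)
  finally show ?thesis
    by (simp add: br_self eq_neg_iff_add_eq_0 add.commute)
qed

lemma br_minus_minus: "br (- x) (- y) = br x y"
  using linear_neg[OF linear_br_right] linear_neg[OF linear_br_left] by simp

definition schouten_term :: "real^'n^'n \<Rightarrow> real^'n \<Rightarrow> real^'n \<Rightarrow> real^'n \<Rightarrow> real" where
  "schouten_term \<rho> \<alpha> \<beta> \<gamma> = \<alpha> \<bullet> br (sharp \<rho> \<beta>) (sharp \<rho> \<gamma>)"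

lemma schouten_term_antisym: "schouten_term \<rho> \<alpha> \<gamma> \<beta> = - schouten_term \<rho> \<alpha> \<beta> \<gamma>"
  unfolding schouten_term_def by (subst br_antisym) simp

text \<open>Antisymmetry of \<open>\<rho>\<close> turns the four terms in the definition of \<open>schouten2\<close> into
  one and the same sum.\<close>
lemma schouten2_self:
  assumes "is_bivector \<rho>"
  shows "schouten2 br \<rho> \<rho> \<xi> \<eta> \<zeta> =
    (\<Sum>a\<in>UNIV. \<Sum>b\<in>UNIV. \<Sum>c\<in>UNIV. \<Sum>d\<in>UNIV. \<rho>$a$b * \<rho>$c$d *
        w3 (br (axis a 1) (axis c 1)) (axis b 1) (axis d 1) \<xi> \<eta> \<zeta>)"
    (is "_ = ?S1")
proof -
  let ?S2 = "\<Sum>a\<in>UNIV. \<Sum>b\<in>UNIV. \<Sum>c\<in>UNIV. \<Sum>d\<in>UNIV. \<rho>$a$b * \<rho>$c$d *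
        w3 (br (axis a 1) (axis d 1)) (axis b 1) (axis c 1) \<xi> \<eta> \<zeta>"
  let ?S3 = "\<Sum>a\<in>UNIV. \<Sum>b\<in>UNIV. \<Sum>c\<in>UNIV. \<Sum>d\<in>UNIV. \<rho>$a$b * \<rho>$c$d *
        w3 (br (axis b 1) (axis c 1)) (axis a 1) (axis d 1) \<xi> \<eta> \<zeta>"
  let ?S4 = "\<Sum>a\<in>UNIV. \<Sum>b\<in>UNIV. \<Sum>c\<in>UNIV. \<Sum>d\<in>UNIV. \<rho>$a$b * \<rho>$c$d *
        w3 (br (axis b 1) (axis d 1)) (axis a 1) (axis c 1) \<xi> \<eta> \<zeta>"
  let ?T = "\<lambda>A B. \<Sum>a\<in>UNIV. \<Sum>b\<in>UNIV. \<Sum>c\<in>UNIV. \<Sum>d\<in>UNIV. A$a$b * B$c$d *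
        w3 (br (axis a 1) (axis c 1)) (axis b 1) (axis d 1) \<xi> \<eta> \<zeta>"
  have tr: "transpose \<rho> = - \<rho>"
    using assms unfolding is_bivector_def .
  have "schouten2 br \<rho> \<rho> \<xi> \<eta> \<zeta> = (1/4) * (?S1 - ?S2 - ?S3 + ?S4)"
    unfolding schouten2_def by (simp add: sum_subtractf sum.distrib sum_distrib_left algebra_simps)
  moreover have "?S2 = ?T \<rho> (transpose \<rho>)"
    unfolding transpose_def vec_lambda_beta
    by (rule sum.cong[OF refl], rule sum.cong[OF refl]) (rule sum.swap)
  moreover have "?S3 = ?T (transpose \<rho>) \<rho>"
    unfolding transpose_def vec_lambda_beta by (rule sum.swap)
  moreover have "?S4 = ?T (transpose \<rho>) (transpose \<rho>)"
  proof -
    have "?S4 = (\<Sum>b\<in>UNIV. \<Sum>a\<in>UNIV. \<Sum>c\<in>UNIV. \<Sum>d\<in>UNIV. \<rho>$a$b * \<rho>$c$d *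
        w3 (br (axis b 1) (axis d 1)) (axis a 1) (axis c 1) \<xi> \<eta> \<zeta>)"
      by (rule sum.swap)
    also have "\<dots> = (\<Sum>b\<in>UNIV. \<Sum>a\<in>UNIV. \<Sum>d\<in>UNIV. \<Sum>c\<in>UNIV. \<rho>$a$b * \<rho>$c$d *
        w3 (br (axis b 1) (axis d 1)) (axis a 1) (axis c 1) \<xi> \<eta> \<zeta>)"
      by (rule sum.cong[OF refl], rule sum.cong[OF refl]) (rule sum.swap)
    finally show ?thesis
      unfolding transpose_def vec_lambda_beta .
  qed
  ultimately show ?thesis
    unfolding tr by (simp add: sum_negf)
qed

lemma contract_w3_axes:
  "(\<Sum>a\<in>UNIV. \<Sum>b\<in>UNIV. \<Sum>c\<in>UNIV. \<Sum>d\<in>UNIV. \<rho>$a$b * \<rho>$c$d *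
      w3 (br (axis a 1) (axis c 1)) (axis b 1) (axis d 1) \<xi> \<eta> \<zeta>)
   = (\<Sum>a\<in>UNIV. \<Sum>c\<in>UNIV. w3 (br (axis a 1) (axis c 1)) (\<rho>$a) (\<rho>$c) \<xi> \<eta> \<zeta>)"
proof -
  have contract: "(\<Sum>b\<in>UNIV. \<Sum>d\<in>UNIV. \<rho>$a$b * \<rho>$c$d * w3 x (axis b 1) (axis d 1) \<xi> \<eta> \<zeta>)
      = w3 x (\<rho>$a) (\<rho>$c) \<xi> \<eta> \<zeta>" for a c x
  proof -
    have inner: "(\<Sum>d\<in>UNIV. \<rho>$c$d * w3 x y (axis d 1) \<xi> \<eta> \<zeta>) = w3 x y (\<rho>$c) \<xi> \<eta> \<zeta>" for y
      using linear_eq_sum_axis[OF w3_linear_3[where x=x and y=y and \<xi>=\<xi> and \<eta>=\<eta> and \<zeta>=\<zeta>],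
          of "\<rho>$c"]
      by simp
    have outer: "(\<Sum>b\<in>UNIV. \<rho>$a$b * w3 x (axis b 1) z \<xi> \<eta> \<zeta>) = w3 x (\<rho>$a) z \<xi> \<eta> \<zeta>" for z
      using linear_eq_sum_axis[OF w3_linear_2[where x=x and z=z and \<xi>=\<xi> and \<eta>=\<eta> and \<zeta>=\<zeta>],
          of "\<rho>$a"]
      by simp
    show ?thesis
      by (simp add: mult.assoc flip: sum_distrib_left) (simp add: inner outer)
  qed
  have "(\<Sum>a\<in>UNIV. \<Sum>b\<in>UNIV. \<Sum>c\<in>UNIV. \<Sum>d\<in>UNIV. \<rho>$a$b * \<rho>$c$d *
      w3 (br (axis a 1) (axis c 1)) (axis b 1) (axis d 1) \<xi> \<eta> \<zeta>)
    = (\<Sum>a\<in>UNIV. \<Sum>c\<in>UNIV. \<Sum>b\<in>UNIV. \<Sum>d\<in>UNIV. \<rho>$a$b * \<rho>$c$d *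
      w3 (br (axis a 1) (axis c 1)) (axis b 1) (axis d 1) \<xi> \<eta> \<zeta>)"
    by (rule sum.cong[OF refl]) (rule sum.swap)
  then show ?thesis
    by (simp add: contract)
qed

lemma inner_br_rows:
  "(\<Sum>a\<in>UNIV. \<Sum>c\<in>UNIV. (\<alpha> \<bullet> br (axis a 1) (axis c 1)) * (\<beta> \<bullet> \<rho>$a) * (\<gamma> \<bullet> \<rho>$c))
   = \<alpha> \<bullet> br (\<rho> *v \<beta>) (\<rho> *v \<gamma>)"
proof -
  have "br (\<rho> *v \<beta>) (\<rho> *v \<gamma>)
      = (\<Sum>a\<in>UNIV. (\<rho> *v \<beta>)$a *\<^sub>R (\<Sum>c\<in>UNIV. (\<rho> *v \<gamma>)$c *\<^sub>R br (axis a 1) (axis c 1)))"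
    by (subst linear_eq_sum_axis[OF linear_br_left]) (subst linear_eq_sum_axis[OF linear_br_right], rule refl)
  then show ?thesis
    by (simp add: inner_sum_right matrix_vector_mul_component sum_distrib_left inner_commute mult_ac)
qed

lemma sum_w3_rows:
  "(\<Sum>a\<in>UNIV. \<Sum>c\<in>UNIV. w3 (br (axis a 1) (axis c 1)) (\<rho>$a) (\<rho>$c) \<xi> \<eta> \<zeta>)
   = \<xi> \<bullet> br (\<rho> *v \<eta>) (\<rho> *v \<zeta>) - \<xi> \<bullet> br (\<rho> *v \<zeta>) (\<rho> *v \<eta>)
   - \<eta> \<bullet> br (\<rho> *v \<xi>) (\<rho> *v \<zeta>) + \<zeta> \<bullet> br (\<rho> *v \<xi>) (\<rho> *v \<eta>)
   + \<eta> \<bullet> br (\<rho> *v \<zeta>) (\<rho> *v \<xi>) - \<zeta> \<bullet> br (\<rho> *v \<eta>) (\<rho> *v \<xi>)"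
proof -
  let ?G = "\<lambda>\<alpha> \<beta> \<gamma> a c. (\<alpha> \<bullet> br (axis a 1) (axis c 1)) * (\<beta> \<bullet> \<rho>$a) * (\<gamma> \<bullet> \<rho>$c)"
  have "w3 (br (axis a 1) (axis c 1)) (\<rho>$a) (\<rho>$c) \<xi> \<eta> \<zeta>
      = ?G \<xi> \<eta> \<zeta> a c - ?G \<xi> \<zeta> \<eta> a c - ?G \<eta> \<xi> \<zeta> a c + ?G \<zeta> \<xi> \<eta> a c
        + ?G \<eta> \<zeta> \<xi> a c - ?G \<zeta> \<eta> \<xi> a c" for a c
    by (simp add: w3_def algebra_simps inner_commute)
  then show ?thesis
    by (simp add: sum_subtractf sum.distrib flip: inner_br_rows)
qed

lemma half_schouten2_self:
  assumes "is_bivector \<rho>"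
  shows "(1/2) * schouten2 br \<rho> \<rho> \<xi> \<eta> \<zeta>
    = schouten_term \<rho> \<xi> \<eta> \<zeta> + schouten_term \<rho> \<eta> \<zeta> \<xi> + schouten_term \<rho> \<zeta> \<xi> \<eta>"
proof -
  have rows: "\<alpha> \<bullet> br (\<rho> *v \<beta>) (\<rho> *v \<gamma>) = schouten_term \<rho> \<alpha> \<beta> \<gamma>" for \<alpha> \<beta> \<gamma>
    by (simp add: schouten_term_def bivector_mult_vector[OF assms] br_minus_minus)
  show ?thesis
    unfolding schouten2_self[OF assms] contract_w3_axes sum_w3_rows rows
    using schouten_term_antisym[of \<rho> \<xi> \<eta> \<zeta>] schouten_term_antisym[of \<rho> \<eta> \<zeta> \<xi>]
      schouten_term_antisym[of \<rho> \<zeta> \<xi> \<eta>]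
    by simp
qed

end

section \<open>Jacobi's formula\<close>

definition det_deriv :: "real^'m^'m \<Rightarrow> real^'m^'m \<Rightarrow> real" where
  "det_deriv M H = (\<Sum>i\<in>UNIV. det (\<chi> k. if k = i then H$k else M$k))"

lemma prod_row_replaced:
  "(\<Prod>k\<in>UNIV. (\<chi> k. if k = i then H$k else M$k) $ k $ p k)
   = H$i$p i * (\<Prod>j\<in>UNIV-{i}. M$j$p j)"
  for M H :: "real^'m^'m"
proof -
  have "(\<Prod>k\<in>UNIV-{i}. (\<chi> k. if k = i then H$k else M$k) $ k $ p k) = (\<Prod>j\<in>UNIV-{i}. M$j$p j)"
    by (rule prod.cong) auto
  then show ?thesis
    by (subst prod.remove[of UNIV i]) auto
qed

lemma has_derivative_det: "(det has_derivative det_deriv M) (at M)"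
  for M :: "real^'m^'m"
proof -
  let ?P = "{p. p permutes (UNIV::'m set)}"
  have entry: "bounded_linear (\<lambda>A::real^'m^'m. A$i$j)" for i j
    using bounded_linear_compose[OF bounded_linear_vec_nth[of j] bounded_linear_vec_nth[of i]] by simp
  have "((\<lambda>A::real^'m^'m. \<Sum>p\<in>?P. of_int (sign p) * (\<Prod>i\<in>UNIV. A$i$p i)) has_derivative
     (\<lambda>H. \<Sum>p\<in>?P. of_int (sign p) * (\<Sum>i\<in>UNIV. H$i$p i * (\<Prod>j\<in>UNIV-{i}. M$j$p j)))) (at M)"
    by (intro has_derivative_sum has_derivative_mult_right has_derivative_prod
        bounded_linear_imp_has_derivative entry)
  moreover have "(\<Sum>p\<in>?P. of_int (sign p) * (\<Sum>i\<in>UNIV. H$i$p i * (\<Prod>j\<in>UNIV-{i}. M$j$p j)))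
      = det_deriv M H" for H :: "real^'m^'m"
  proof -
    have "(\<Sum>p\<in>?P. of_int (sign p) * (\<Sum>i\<in>UNIV. H$i$p i * (\<Prod>j\<in>UNIV-{i}. M$j$p j)))
       = (\<Sum>p\<in>?P. \<Sum>i\<in>UNIV. of_int (sign p) * (H$i$p i * (\<Prod>j\<in>UNIV-{i}. M$j$p j)))"
      by (simp add: sum_distrib_left)
    also have "\<dots> = (\<Sum>i\<in>UNIV. \<Sum>p\<in>?P. of_int (sign p) * (H$i$p i * (\<Prod>j\<in>UNIV-{i}. M$j$p j)))"
      by (rule sum.swap)
    also have "\<dots> = det_deriv M H"
      unfolding det_deriv_def det_def prod_row_replaced ..
    finally show ?thesis .
  qed
  ultimately show ?thesis
    unfolding det_def[abs_def] by simp
qed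

lemma linear_det_deriv: "linear (det_deriv M)"
  using has_derivative_linear[OF has_derivative_det] .

lemma det_row_replaced_mult:
  "det (\<chi> k. if k = i then (X ** M)$k else M$k) = X$i$i * det M"
  for X M :: "real^'m^'m"
proof -
  have row: "(X ** M) $ i = (\<Sum>j\<in>UNIV. X$i$j *s M$j)"
    by (simp add: vec_eq_iff matrix_matrix_mult_def)
  have other_rows: "det (\<chi> k. if k = i then M$j else M$k) = 0" if "j \<noteq> i" for j
    by (rule det_identical_rows[of i j]) (use that in \<open>auto simp: row_def vec_eq_iff\<close>)
  have "det (\<chi> k. if k = i then (X ** M)$k else M$k)
      = det (\<chi> k. if k = i then (\<Sum>j\<in>UNIV. X$i$j *s M$j) else M$k)"
    by (rule arg_cong[where f = det]) (simp add: vec_eq_iff row)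
  also have "\<dots> = (\<Sum>j\<in>UNIV. det (\<chi> k. if k = i then X$i$j *s M$j else M$k))"
    by (rule det_linear_row_sum) simp
  also have "\<dots> = (\<Sum>j\<in>UNIV. X$i$j * det (\<chi> k. if k = i then M$j else M$k))"
    by (simp add: det_row_mul)
  also have "\<dots> = X$i$i * det (\<chi> k. if k = i then M$i else M$k)"
    by (subst sum.remove[of UNIV i]) (auto simp: other_rows)
  also have "(\<chi> k. if k = i then M$i else M$k) = M"
    by (simp add: vec_eq_iff)
  finally show ?thesis .
qed

lemma det_deriv_mult_left: "det_deriv M (X ** M) = trace X * det M"
  by (simp add: det_deriv_def trace_def det_row_replaced_mult sum_distrib_right)

lemma det_deriv_transpose: "det_deriv M H = det_deriv (transpose M) (transpose H)"
proof -
  have "((\<lambda>A. det (transpose A)) has_derivative (\<lambda>H. det_deriv (transpose M) (transpose H))) (at M)"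
    using has_derivative_compose[OF linear_imp_has_derivative[OF linear_transpose]
        has_derivative_det[of "transpose M"]] .
  moreover have "((\<lambda>A. det (transpose A)) has_derivative det_deriv M) (at M)"
    using has_derivative_det[of M] by simp
  ultimately have "(\<lambda>H. det_deriv (transpose M) (transpose H)) = det_deriv M"
    by (rule has_derivative_unique)
  then show ?thesis
    by metis
qed

lemma det_deriv_mult_right: "det_deriv M (M ** Y) = trace Y * det M"
  by (simp add: det_deriv_transpose[of M] matrix_transpose_mul det_deriv_mult_left trace_transpose)

text \<open>Gronwall's argument: \<open>f\<^sup>2 e\<^sup>2\<^sup>K\<^sup>t\<close> is nondecreasing for a bound \<open>K\<close> of \<open>\<bar>c\<bar>\<close>.\<close>
lemma linear_ode_nonzero:
  fixes f c :: "real \<Rightarrow> real"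
  assumes "a \<le> b"
    and deriv: "\<And>t. t \<in> {a..b} \<Longrightarrow> (f has_real_derivative c t * f t) (at t)"
    and "continuous_on {a..b} c" and "f a \<noteq> 0"
  shows "f b \<noteq> 0"
proof -
  obtain K where K: "\<forall>t\<in>{a..b}. \<bar>c t\<bar> \<le> K"
    using compact_imp_bounded[OF compact_continuous_image[OF \<open>continuous_on {a..b} c\<close> compact_Icc]]
    by (auto simp: bounded_iff)
  define g where "g t = (f t)\<^sup>2 * exp (2*K*t)" for t
  have "g a \<le> g b"
  proof (rule DERIV_nonneg_imp_nondecreasing[OF \<open>a \<le> b\<close>])
    fix t :: real
    assume t: "a \<le> t" "t \<le> b"
    have "(g has_real_derivative 2 * (f t)\<^sup>2 * exp (2*K*t) * (c t + K)) (at t)"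
      unfolding g_def using t
      by (auto intro!: derivative_eq_intros deriv simp: power2_eq_square algebra_simps)
    moreover have "\<bar>c t\<bar> \<le> K"
      using K t by simp
    then have "c t + K \<ge> 0"
      by linarith
    ultimately show "\<exists>y. DERIV g t :> y \<and> 0 \<le> y"
      by (intro exI[of _ "2 * (f t)\<^sup>2 * exp (2*K*t) * (c t + K)"] conjI) simp_all
  qed
  moreover have "g a > 0"
    using \<open>f a \<noteq> 0\<close> by (simp add: g_def)
  ultimately show ?thesis
    by (auto simp: g_def)
qed

section \<open>Triangular dynamical r-matrices\<close>

locale triangular_dynamical_r_matrix =
  fixes br :: "real^'n \<Rightarrow> real^'n \<Rightarrow> real^'n"
    and hb :: "'l::finite \<Rightarrow> real^'n"
    and r :: "real^'l \<Rightarrow> real^'n^'n"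
  assumes lie_algebra: "lie_algebra br"
    and abelian: "abelian_subalg_basis br hb"
    and triangular: "triangular_dyn_rmatrix br hb r"
begin

sublocale skew_bracket br
  using lie_algebra unfolding lie_algebra_def by unfold_locales blast+

lemma br_hb_hb: "br (hb i) (hb j) = 0"
  using abelian unfolding abelian_subalg_basis_def by (simp add: span_base)

lemma bivector_r: "is_bivector (r lam)"
  using triangular unfolding triangular_dyn_rmatrix_def by blast

lemma ad_biv_r: "h \<in> span (range hb) \<Longrightarrow> ad_biv br h (r lam) = 0"
  using triangular unfolding triangular_dyn_rmatrix_def by blast

lemma dcybe: "dyn_term hb r lam \<xi> \<eta> \<zeta> + (1/2) * schouten2 br (r lam) (r lam) \<xi> \<eta> \<zeta> = 0"
  using triangular unfolding triangular_dyn_rmatrix_def by blast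

abbreviation rpair :: "real^'l \<Rightarrow> real^'n \<Rightarrow> real^'n \<Rightarrow> real" where
  "rpair lam \<xi> \<eta> \<equiv> sharp (r lam) \<xi> \<bullet> \<eta>"

lemma rpair_antisym: "rpair lam \<xi> \<eta> = - rpair lam \<eta> \<xi>"
  using sharp_inner_antisym[OF bivector_r] .

lemma rpair_ad_transpose_invariant:
  assumes "h \<in> span (range hb)"
  shows "rpair lam (ad_transpose br h \<alpha>) \<beta> + rpair lam \<alpha> (ad_transpose br h \<beta>) = 0"
proof -
  have "0 = sharp (ad_biv br h (r lam)) \<alpha> \<bullet> \<beta>"
    using ad_biv_r[OF assms] by (simp add: sharp_def)
  also have "\<dots> = rpair lam (ad_transpose br h \<alpha>) \<beta> + br h (sharp (r lam) \<alpha>) \<bullet> \<beta>"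
    by (simp add: sharp_ad_biv[OF linear_br_right] inner_add_left)
  also have "br h (sharp (r lam) \<alpha>) \<bullet> \<beta> = rpair lam \<alpha> (ad_transpose br h \<beta>)"
    using ad_transpose_inner[of br h \<beta> "sharp (r lam) \<alpha>", OF linear_br_right]
    by (simp only: inner_commute)
  finally show ?thesis
    by simp
qed

lemma schouten_term_eq_rpair:
  "schouten_term (r lam) \<alpha> \<beta> \<gamma> = rpair lam \<gamma> (ad_transpose br (sharp (r lam) \<beta>) \<alpha>)"
  using ad_transpose_inner[of br "sharp (r lam) \<beta>" \<alpha> "sharp (r lam) \<gamma>", OF linear_br_right]
  by (simp only: schouten_term_def inner_commute)

definition dual_hb :: "'l \<Rightarrow> real^'n" where
  "dual_hb k = (SOME t. \<forall>i. t \<bullet> hb i = (if i = k then 1 else 0))"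

lemma dual_hb_exists: "\<exists>t. \<forall>i. t \<bullet> hb i = (if i = k then 1 else (0::real))"
proof -
  have "independent (range hb)" and "inj hb"
    using abelian unfolding abelian_subalg_basis_def by auto
  then obtain g :: "real^'n \<Rightarrow> real"
    where g: "linear g" "\<forall>x\<in>range hb. g x = (if x = hb k then 1 else 0)"
    using linear_independent_extend[of "range hb" "\<lambda>x. if x = hb k then 1 else (0::real)"] by blast
  define t where "t = (\<chi> a. g (axis a 1))"
  have t: "t \<bullet> x = g x" for x
    using linear_eq_sum_axis[OF g(1), of x] by (simp add: t_def inner_vec_def mult.commute)
  show ?thesis
    by (rule exI[of _ t]) (use g(2) \<open>inj hb\<close> t in \<open>auto simp: inj_eq\<close>)
qed

lemma inner_dual_hb: "dual_hb k \<bullet> hb i = (if i = k then 1 else 0)"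
  using someI_ex[OF dual_hb_exists[of k]] unfolding dual_hb_def by blast

lemma inner_hb_dual_hb: "hb i \<bullet> dual_hb k = (if i = k then 1 else 0)"
  using inner_dual_hb by (simp add: inner_commute)

lemma mem_h_perp: "\<xi> \<in> h_perp hb \<longleftrightarrow> (\<forall>i. \<xi> \<bullet> hb i = 0)"
  by (simp add: h_perp_def)

lemma subspace_h_perp: "subspace (h_perp hb)"
  by (auto simp: subspace_def mem_h_perp inner_add_left)

lemma inner_h_perp_span_hb:
  assumes "x \<in> span (range hb)" "\<eta> \<in> h_perp hb"
  shows "\<eta> \<bullet> x = 0"
proof -
  have "x \<in> {x. \<eta> \<bullet> x = 0}"
    by (rule span_induct[OF assms(1)]) (use assms(2) in \<open>auto simp: mem_h_perp subspace_hyperplane\<close>)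
  then show ?thesis
    by simp
qed

lemma sum_hb_in_span: "(\<Sum>k\<in>UNIV. c k *\<^sub>R hb k) \<in> span (range hb)"
  by (intro span_sum span_scale span_base) auto

lemma sum_hb_eq_0_imp:
  assumes "(\<Sum>k\<in>UNIV. c k *\<^sub>R hb k) = 0"
  shows "c m = 0"
proof -
  have "dual_hb m \<bullet> (\<Sum>k\<in>UNIV. c k *\<^sub>R hb k) = 0"
    using assms by simp
  then show ?thesis
    by (simp add: inner_sum_right inner_dual_hb if_distrib cong: if_cong)
qed

definition proj_perp :: "real^'n \<Rightarrow> real^'n" where
  "proj_perp \<xi> = \<xi> - (\<Sum>k\<in>UNIV. (\<xi> \<bullet> hb k) *\<^sub>R dual_hb k)"

lemma proj_perp_in_h_perp: "proj_perp \<xi> \<in> h_perp hb"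
  by (simp add: mem_h_perp proj_perp_def inner_diff_left inner_sum_left inner_dual_hb
      if_distrib cong: if_cong)

lemma proj_perp_id: "\<xi> \<in> h_perp hb \<Longrightarrow> proj_perp \<xi> = \<xi>"
  by (simp add: mem_h_perp proj_perp_def)

lemma linear_proj_perp: "linear proj_perp"
  unfolding proj_perp_def
  by (rule linearI) (simp_all add: sum.distrib scaleR_sum_right algebra_simps)

lemma proj_perp_add: "proj_perp (x + y) = proj_perp x + proj_perp y"
  and proj_perp_scaleR: "proj_perp (c *\<^sub>R x) = c *\<^sub>R proj_perp x"
  and proj_perp_minus: "proj_perp (- x) = - proj_perp x"
  using linear_proj_perp by (auto simp: linear_add linear_scale linear_neg)

lemma proj_perp_decomp: "\<xi> = proj_perp \<xi> + (\<Sum>k\<in>UNIV. (\<xi> \<bullet> hb k) *\<^sub>R dual_hb k)"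
  by (simp add: proj_perp_def)

lemma orthogonal_h_perp_imp_span:
  assumes "\<And>\<xi>. \<xi> \<in> h_perp hb \<Longrightarrow> w \<bullet> \<xi> = 0"
  shows "w = (\<Sum>k\<in>UNIV. (w \<bullet> dual_hb k) *\<^sub>R hb k)"
proof -
  define w' where "w' = w - (\<Sum>k\<in>UNIV. (w \<bullet> dual_hb k) *\<^sub>R hb k)"
  have "w' \<bullet> proj_perp \<zeta> = 0" for \<zeta>
  proof -
    have "(\<Sum>k\<in>UNIV. (w \<bullet> dual_hb k) *\<^sub>R hb k) \<bullet> proj_perp \<zeta> = 0"
      using inner_h_perp_span_hb[OF sum_hb_in_span proj_perp_in_h_perp] by (simp add: inner_commute)
    then show ?thesis
      using assms[OF proj_perp_in_h_perp] by (simp add: w'_def inner_diff_left)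
  qed
  moreover have "w' \<bullet> dual_hb m = 0" for m
    by (simp add: w'_def inner_diff_left inner_sum_left inner_hb_dual_hb if_distrib cong: if_cong)
  ultimately have "w' \<bullet> \<zeta> = 0" for \<zeta>
    by (subst proj_perp_decomp[of \<zeta>]) (simp add: inner_add_right inner_sum_right)
  then have "w' = 0"
    by (metis inner_eq_zero_iff)
  then show ?thesis
    by (simp add: w'_def)
qed

lemma rpair_decomp_left:
  "rpair lam w \<eta> = rpair lam (proj_perp w) \<eta> + (\<Sum>k\<in>UNIV. (w \<bullet> hb k) * rpair lam (dual_hb k) \<eta>)"
proof -
  have "sharp (r lam) w
      = sharp (r lam) (proj_perp w) + (\<Sum>k\<in>UNIV. (w \<bullet> hb k) *\<^sub>R sharp (r lam) (dual_hb k))"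
    by (subst proj_perp_decomp[of w]) (simp add: sharp_add sharp_sum sharp_scaleR)
  then show ?thesis
    by (simp add: inner_add_left inner_sum_left)
qed

lemma rpair_decomp_right:
  "rpair lam \<xi> w = rpair lam \<xi> (proj_perp w) + (\<Sum>k\<in>UNIV. (w \<bullet> hb k) * rpair lam \<xi> (dual_hb k))"
  by (subst proj_perp_decomp[of w]) (simp add: inner_add_right inner_sum_right)

definition dr :: "real^'l \<Rightarrow> real^'l \<Rightarrow> real^'n^'n" where
  "dr lam = frechet_derivative r (at lam)"

lemma differentiable_r: "r differentiable (at lam)"
proof -
  obtain F :: "'l list \<Rightarrow> real^'l \<Rightarrow> real^'n^'n" where F: "F [] = r"
    "\<And>ks x. (F ks has_derivative (\<lambda>v. \<Sum>i\<in>UNIV. v $ i *\<^sub>R F (i # ks) x)) (at x)"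
    using triangular unfolding triangular_dyn_rmatrix_def smooth_map_def by blast
  show ?thesis
    using F(2)[of "[]" lam] unfolding F(1) differentiable_def by blast
qed

lemma has_derivative_r: "(r has_derivative dr lam) (at lam)"
  unfolding dr_def using differentiable_r by (rule frechet_derivative_works[THEN iffD1])

lemma continuous_r: "continuous_on UNIV r"
  using differentiable_r by (simp add: differentiable_imp_continuous_on differentiable_on_def)

lemma linear_dr: "linear (dr lam)"
  using has_derivative_linear[OF has_derivative_r] .

lemma bivector_dr: "is_bivector (dr lam v)"
proof -
  have "((\<lambda>x. transpose (r x)) has_derivative (\<lambda>v. transpose (dr lam v))) (at lam)"
    using has_derivative_compose[OF has_derivative_r linear_imp_has_derivative[OF linear_transpose]] .
  moreover have "(\<lambda>x. transpose (r x)) = (\<lambda>x. - r x)"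
    using bivector_r unfolding is_bivector_def by auto
  ultimately have "((\<lambda>x. - r x) has_derivative (\<lambda>v. transpose (dr lam v))) (at lam)"
    by simp
  then have "(\<lambda>v. transpose (dr lam v)) = (\<lambda>v. - dr lam v)"
    using has_derivative_minus[OF has_derivative_r] by (rule has_derivative_unique)
  then show ?thesis
    unfolding is_bivector_def by metis
qed

lemma dyn_term_h_perp:
  assumes "\<xi> \<in> h_perp hb" "\<eta> \<in> h_perp hb"
  shows "dyn_term hb r lam \<theta> \<xi> \<eta> = (\<Sum>i\<in>UNIV. (\<theta> \<bullet> hb i) * biv_eval (dr lam (axis i 1)) \<xi> \<eta>)"
proof -
  have w3: "w3 (hb i) (axis a 1) (axis b 1) \<theta> \<xi> \<eta> = (\<theta> \<bullet> hb i) * (\<xi>$a * \<eta>$b - \<xi>$b * \<eta>$a)" for i a b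
    using assms by (simp add: mem_h_perp w3_def inner_axis)
  have sum_ab: "(\<Sum>a\<in>UNIV. \<Sum>b\<in>UNIV. (1/2) * D$a$b * w3 (hb i) (axis a 1) (axis b 1) \<theta> \<xi> \<eta>)
      = (\<theta> \<bullet> hb i) * ((1/2) * (biv_eval D \<xi> \<eta> - biv_eval D \<eta> \<xi>))" for i and D :: "real^'n^'n"
    unfolding w3 biv_eval_def by (simp add: sum_subtractf sum_distrib_left algebra_simps)
  have antisym: "biv_eval (dr lam v) \<eta> \<xi> = - biv_eval (dr lam v) \<xi> \<eta>" for v
    using sharp_inner_antisym[OF bivector_dr, of lam v \<eta> \<xi>] by (simp add: sharp_inner)
  have "dyn_term hb r lam \<theta> \<xi> \<eta> = (\<Sum>i\<in>UNIV. \<Sum>a\<in>UNIV. \<Sum>b\<in>UNIV.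
     (1/2) * dr lam (axis i 1) $ a $ b * w3 (hb i) (axis a 1) (axis b 1) \<theta> \<xi> \<eta>)"
    unfolding dyn_term_def dr_def ..
  also have "\<dots> = (\<Sum>i\<in>UNIV. (\<theta> \<bullet> hb i) *
      ((1/2) * (biv_eval (dr lam (axis i 1)) \<xi> \<eta> - biv_eval (dr lam (axis i 1)) \<eta> \<xi>)))"
    by (rule sum.cong[OF refl], rule sum_ab)
  finally show ?thesis
    by (simp add: antisym)
qed

definition dual_vec :: "real^'l \<Rightarrow> real^'n" where
  "dual_vec v = (\<Sum>k\<in>UNIV. v $ k *\<^sub>R dual_hb k)"

lemma inner_dual_vec_hb: "dual_vec v \<bullet> hb i = v $ i"
  by (simp add: dual_vec_def inner_sum_left inner_dual_hb if_distrib cong: if_cong)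

lemma dr_h_perp_cybe:
  assumes "\<xi> \<in> h_perp hb" "\<eta> \<in> h_perp hb"
  shows "biv_eval (dr lam v) \<xi> \<eta> + schouten_term (r lam) (dual_vec v) \<xi> \<eta>
    + schouten_term (r lam) \<xi> \<eta> (dual_vec v) + schouten_term (r lam) \<eta> (dual_vec v) \<xi> = 0"
proof -
  have "biv_eval (dr lam v) \<xi> \<eta> = biv_eval (\<Sum>i\<in>UNIV. v $ i *\<^sub>R dr lam (axis i 1)) \<xi> \<eta>"
    by (subst linear_eq_sum_axis[OF linear_dr]) (rule refl)
  also have "\<dots> = (\<Sum>i\<in>UNIV. v $ i * biv_eval (dr lam (axis i 1)) \<xi> \<eta>)"
    by (simp add: linear_sum[OF linear_biv_eval[of \<xi> \<eta>]] linear_scale[OF linear_biv_eval[of \<xi> \<eta>]])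
  also have "\<dots> = dyn_term hb r lam (dual_vec v) \<xi> \<eta>"
    by (simp add: dyn_term_h_perp[OF assms] inner_dual_vec_hb)
  finally show ?thesis
    using dcybe[of lam "dual_vec v" \<xi> \<eta>] half_schouten2_self[OF bivector_r, of lam "dual_vec v" \<xi> \<eta>]
    by linarith
qed

lemma ad_transpose_hb_in_h_perp: "ad_transpose br (hb k) \<theta> \<in> h_perp hb"
  by (simp add: mem_h_perp ad_transpose_inner[OF linear_br_right] br_hb_hb)

lemma inner_ad_transpose_sharp_hb:
  "ad_transpose br (sharp (r lam) \<theta>) \<xi> \<bullet> hb k = rpair lam (ad_transpose br (hb k) \<theta>) \<xi>"
proof -
  have "ad_transpose br (sharp (r lam) \<theta>) \<xi> \<bullet> hb k = - (ad_transpose br (hb k) \<xi> \<bullet> sharp (r lam) \<theta>)"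
    by (simp add: ad_transpose_inner[OF linear_br_right]) (subst br_antisym, simp)
  also have "\<dots> = rpair lam (ad_transpose br (hb k) \<theta>) \<xi>"
    using rpair_ad_transpose_invariant[of "hb k" lam \<theta> \<xi>] by (simp add: span_base inner_commute)
  finally show ?thesis .
qed

lemma inner_ad_transpose_sharp_hb':
  "ad_transpose br (sharp (r lam) \<eta>) \<theta> \<bullet> hb k = rpair lam (ad_transpose br (hb k) \<theta>) \<eta>"
proof -
  have "ad_transpose br (sharp (r lam) \<eta>) \<theta> \<bullet> hb k = - (ad_transpose br (hb k) \<theta> \<bullet> sharp (r lam) \<eta>)"
    by (simp add: ad_transpose_inner[OF linear_br_right]) (subst br_antisym, simp)
  also have "\<dots> = - rpair lam \<eta> (ad_transpose br (hb k) \<theta>)"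
    by (rule arg_cong[where f = uminus], rule inner_commute)
  also have "\<dots> = rpair lam (ad_transpose br (hb k) \<theta>) \<eta>"
    using rpair_antisym[of lam \<eta> "ad_transpose br (hb k) \<theta>"] by simp
  finally show ?thesis .
qed

definition deriv_left :: "real^'n^'n \<Rightarrow> real^'n \<Rightarrow> real^'n \<Rightarrow> real^'n" where
  "deriv_left \<rho> \<theta> x = - proj_perp (ad_transpose br (sharp \<rho> \<theta>) x)"

definition deriv_right :: "real^'n^'n \<Rightarrow> real^'n \<Rightarrow> real^'n \<Rightarrow> real^'n" where
  "deriv_right \<rho> \<theta> x = - proj_perp (ad_transpose br (sharp \<rho> \<theta>) x) + proj_perp (ad_transpose br (sharp \<rho> x) \<theta>)
      + (\<Sum>k\<in>UNIV. (sharp \<rho> (dual_hb k) \<bullet> x) *\<^sub>R ad_transpose br (hb k) \<theta>)"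

lemma deriv_left_in_h_perp: "deriv_left \<rho> \<theta> x \<in> h_perp hb"
  unfolding deriv_left_def by (intro subspace_neg[OF subspace_h_perp] proj_perp_in_h_perp)

lemma deriv_right_in_h_perp: "deriv_right \<rho> \<theta> x \<in> h_perp hb"
  unfolding deriv_right_def
  by (intro subspace_add[OF subspace_h_perp] subspace_neg[OF subspace_h_perp] proj_perp_in_h_perp
      subspace_sum[OF subspace_h_perp] subspace_scale[OF subspace_h_perp] ad_transpose_hb_in_h_perp)

text \<open>On \<open>h\<^sup>\<perp>\<close> the derivative of \<open>r\<close> is infinitesimally congruent to \<open>r\<close> itself; this is what
  makes the rank of \<open>r\<close> constant.\<close>
lemma dr_h_perp:
  assumes "\<xi> \<in> h_perp hb" "\<eta> \<in> h_perp hb"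
  shows "biv_eval (dr lam v) \<xi> \<eta>
    = rpair lam (deriv_left (r lam) (dual_vec v) \<xi>) \<eta> + rpair lam \<xi> (deriv_right (r lam) (dual_vec v) \<eta>)"
proof -
  let ?\<theta> = "dual_vec v"
  let ?z = "sharp (r lam) ?\<theta>"
  let ?u = "\<lambda>k. ad_transpose br (hb k) ?\<theta>"
  have "schouten_term (r lam) ?\<theta> \<xi> \<eta> = - rpair lam \<xi> (ad_transpose br (sharp (r lam) \<eta>) ?\<theta>)"
    using schouten_term_antisym[of "r lam" ?\<theta> \<xi> \<eta>] schouten_term_eq_rpair[of lam ?\<theta> \<eta> \<xi>] by simp
  moreover have "schouten_term (r lam) \<xi> \<eta> ?\<theta> = rpair lam (ad_transpose br ?z \<xi>) \<eta>"
    using schouten_term_antisym[of "r lam" \<xi> \<eta> ?\<theta>] schouten_term_eq_rpair[of lam \<xi> ?\<theta> \<eta>]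
      rpair_antisym[of lam \<eta> "ad_transpose br ?z \<xi>"]
    by simp
  moreover have "schouten_term (r lam) \<eta> ?\<theta> \<xi> = rpair lam \<xi> (ad_transpose br ?z \<eta>)"
    by (rule schouten_term_eq_rpair)
  moreover have "rpair lam (ad_transpose br ?z \<xi>) \<eta>
      = rpair lam (proj_perp (ad_transpose br ?z \<xi>)) \<eta> + (\<Sum>k\<in>UNIV. rpair lam (?u k) \<xi> * rpair lam (dual_hb k) \<eta>)"
    using rpair_decomp_left[of lam "ad_transpose br ?z \<xi>" \<eta>] by (simp add: inner_ad_transpose_sharp_hb)
  moreover have "rpair lam \<xi> (ad_transpose br ?z \<eta>)
      = rpair lam \<xi> (proj_perp (ad_transpose br ?z \<eta>)) + (\<Sum>k\<in>UNIV. rpair lam (?u k) \<eta> * rpair lam \<xi> (dual_hb k))"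
    using rpair_decomp_right[of lam \<xi> "ad_transpose br ?z \<eta>"] by (simp add: inner_ad_transpose_sharp_hb)
  moreover have "rpair lam \<xi> (ad_transpose br (sharp (r lam) \<eta>) ?\<theta>)
      = rpair lam \<xi> (proj_perp (ad_transpose br (sharp (r lam) \<eta>) ?\<theta>))
        + (\<Sum>k\<in>UNIV. rpair lam (?u k) \<eta> * rpair lam \<xi> (dual_hb k))"
    using rpair_decomp_right[of lam \<xi> "ad_transpose br (sharp (r lam) \<eta>) ?\<theta>"]
    by (simp add: inner_ad_transpose_sharp_hb')
  moreover have "- (\<Sum>k\<in>UNIV. rpair lam (?u k) \<xi> * rpair lam (dual_hb k) \<eta>)
      = rpair lam \<xi> (\<Sum>k\<in>UNIV. rpair lam (dual_hb k) \<eta> *\<^sub>R ?u k)"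
    by (simp add: inner_sum_right sum_negf[symmetric] rpair_antisym[of lam "?u k" \<xi> for k] mult.commute)
  moreover have "rpair lam (deriv_left (r lam) ?\<theta> \<xi>) \<eta> + rpair lam \<xi> (deriv_right (r lam) ?\<theta> \<eta>)
      = - rpair lam (proj_perp (ad_transpose br ?z \<xi>)) \<eta> - rpair lam \<xi> (proj_perp (ad_transpose br ?z \<eta>))
        + rpair lam \<xi> (proj_perp (ad_transpose br (sharp (r lam) \<eta>) ?\<theta>))
        + rpair lam \<xi> (\<Sum>k\<in>UNIV. rpair lam (dual_hb k) \<eta> *\<^sub>R ?u k)"
    unfolding deriv_left_def deriv_right_def by (simp add: sharp_minus inner_add_right inner_diff_right)
  ultimately show ?thesis
    using dr_h_perp_cybe[OF assms, of lam v] by linarith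
qed

section \<open>Nondegeneracy of \<open>r(\<lambda>)\<close> on \<open>h\<^sup>\<perp>\<close>\<close>

definition nondegenerate_at :: "real^'l \<Rightarrow> bool" where
  "nondegenerate_at lam \<longleftrightarrow> (\<forall>\<eta>\<in>h_perp hb. (\<forall>\<xi>\<in>h_perp hb. rpair lam \<xi> \<eta> = 0) \<longrightarrow> \<eta> = 0)"

lemma nondegenerate_at_if_g_lambda_eq_UNIV:
  assumes "g_lambda hb r lam = UNIV"
  shows "nondegenerate_at lam"
  unfolding nondegenerate_at_def
proof (intro ballI impI)
  fix \<eta>
  assume "\<eta> \<in> h_perp hb" and orth: "\<forall>\<xi>\<in>h_perp hb. rpair lam \<xi> \<eta> = 0"
  obtain x \<xi> where \<eta>: "\<eta> = x + sharp (r lam) \<xi>" "x \<in> span (range hb)" "\<xi> \<in> h_perp hb"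
    using assms unfolding g_lambda_def by blast
  have "\<eta> \<bullet> \<eta> = \<eta> \<bullet> x + \<eta> \<bullet> sharp (r lam) \<xi>"
    by (subst (2) \<eta>(1)) (simp add: inner_add_right)
  also have "\<eta> \<bullet> x = 0"
    using inner_h_perp_span_hb[OF \<eta>(2) \<open>\<eta> \<in> h_perp hb\<close>] .
  also have "\<eta> \<bullet> sharp (r lam) \<xi> = 0"
    using orth \<eta>(3) by (simp add: inner_commute)
  finally show "\<eta> = 0"
    by simp
qed

lemma g_lambda_eq_UNIV_if_nondegenerate_at:
  assumes nondeg: "nondegenerate_at lam"
  shows "g_lambda hb r lam = UNIV"
proof -
  define T where "T \<xi> = sharp (r lam) (proj_perp \<xi>) + (\<Sum>k\<in>UNIV. (\<xi> \<bullet> hb k) *\<^sub>R hb k)" for \<xi>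
  have "linear T"
    unfolding T_def
    by (rule linearI) (simp_all add: proj_perp_add proj_perp_scaleR sharp_add sharp_scaleR
        sum.distrib scaleR_sum_right algebra_simps)
  moreover have "T \<xi> = 0 \<Longrightarrow> \<xi> = 0" for \<xi>
  proof -
    assume "T \<xi> = 0"
    have "rpair lam \<zeta> (proj_perp \<xi>) = 0" if "\<zeta> \<in> h_perp hb" for \<zeta>
    proof -
      have "(\<Sum>k\<in>UNIV. (\<xi> \<bullet> hb k) *\<^sub>R hb k) \<bullet> \<zeta> = 0"
        using inner_h_perp_span_hb[OF sum_hb_in_span that] by (simp add: inner_commute)
      then have "rpair lam (proj_perp \<xi>) \<zeta> = 0"
        using arg_cong[OF \<open>T \<xi> = 0\<close>, of "\<lambda>x. x \<bullet> \<zeta>"] by (simp add: T_def inner_add_left)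
      then show ?thesis
        using rpair_antisym[of lam \<zeta> "proj_perp \<xi>"] by simp
    qed
    then have "proj_perp \<xi> = 0"
      using nondeg proj_perp_in_h_perp unfolding nondegenerate_at_def by blast
    then have "(\<Sum>k\<in>UNIV. (\<xi> \<bullet> hb k) *\<^sub>R hb k) = 0"
      using \<open>T \<xi> = 0\<close> by (simp add: T_def sharp_zero)
    then have "\<xi> \<in> h_perp hb"
      using sum_hb_eq_0_imp[of "\<lambda>k. \<xi> \<bullet> hb k"] by (simp add: mem_h_perp)
    then show "\<xi> = 0"
      using \<open>proj_perp \<xi> = 0\<close> proj_perp_id by simp
  qed
  ultimately have "surj T"
    by (simp add: linear_inj_imp_surj linear_injective_0)
  have "T \<xi> \<in> g_lambda hb r lam" for \<xi>
    unfolding g_lambda_def T_def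
    by (rule CollectI, rule exI[of _ "\<Sum>k\<in>UNIV. (\<xi> \<bullet> hb k) *\<^sub>R hb k"],
        rule exI[of _ "sharp (r lam) (proj_perp \<xi>)"])
       (simp add: add.commute sum_hb_in_span proj_perp_in_h_perp)
  then show ?thesis
    using \<open>surj T\<close> by (metis UNIV_eq_I surjD)
qed

lemma g_lambda_eq_UNIV_iff: "g_lambda hb r lam = UNIV \<longleftrightarrow> nondegenerate_at lam"
  using nondegenerate_at_if_g_lambda_eq_UNIV g_lambda_eq_UNIV_if_nondegenerate_at by blast

lemma Lambda_sharp_eq:
  "Lambda_sharp hb r lam
    = (\<lambda>p. (istar hb (snd p), - (\<Sum>i\<in>UNIV. fst p $ i *\<^sub>R hb i) + sharp (r lam) (snd p)))"
  by (auto simp: Lambda_sharp_def)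

lemma linear_Lambda_sharp: "linear (Lambda_sharp hb r lam)"
  unfolding Lambda_sharp_eq
  by (rule linearI) (simp_all add: istar_def vec_eq_iff sharp_add sharp_scaleR
      sum.distrib scaleR_sum_right algebra_simps)

lemma nondegenerate_at_if_inj_Lambda_sharp:
  assumes inj: "inj (Lambda_sharp hb r lam)"
  shows "nondegenerate_at lam"
  unfolding nondegenerate_at_def
proof (intro ballI impI)
  fix \<eta>
  assume "\<eta> \<in> h_perp hb" and orth: "\<forall>\<xi>\<in>h_perp hb. rpair lam \<xi> \<eta> = 0"
  define w where "w = sharp (r lam) \<eta>"
  have "w \<bullet> \<xi> = 0" if "\<xi> \<in> h_perp hb" for \<xi>
    using orth that rpair_antisym[of lam \<eta> \<xi>] unfolding w_def by simp
  then have "w = (\<Sum>k\<in>UNIV. (w \<bullet> dual_hb k) *\<^sub>R hb k)"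
    by (rule orthogonal_h_perp_imp_span)
  moreover have "istar hb \<eta> = 0"
    using \<open>\<eta> \<in> h_perp hb\<close> by (simp add: istar_def mem_h_perp vec_eq_iff)
  ultimately have "Lambda_sharp hb r lam ((\<chi> k. w \<bullet> dual_hb k), \<eta>) = 0"
    by (simp add: Lambda_sharp_eq w_def zero_prod_def)
  then have "((\<chi> k. w \<bullet> dual_hb k), \<eta>) = 0"
    using inj linear_injective_0[OF linear_Lambda_sharp] by blast
  then show "\<eta> = 0"
    by (simp add: zero_prod_def)
qed

lemma inj_Lambda_sharp_if_nondegenerate_at:
  assumes nondeg: "nondegenerate_at lam"
  shows "inj (Lambda_sharp hb r lam)"
  unfolding linear_injective_0[OF linear_Lambda_sharp]
proof (intro allI impI)
  fix p
  assume "Lambda_sharp hb r lam p = 0"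
  obtain c \<xi> where p: "p = (c, \<xi>)"
    by fastforce
  have "istar hb \<xi> = 0" and sharp_\<xi>: "sharp (r lam) \<xi> = (\<Sum>i\<in>UNIV. c$i *\<^sub>R hb i)"
    using \<open>Lambda_sharp hb r lam p = 0\<close> by (auto simp: p Lambda_sharp_def algebra_simps zero_prod_def)
  then have "\<xi> \<in> h_perp hb"
    by (simp add: mem_h_perp istar_def vec_eq_iff)
  have "rpair lam \<eta> \<xi> = 0" if "\<eta> \<in> h_perp hb" for \<eta>
    using inner_h_perp_span_hb[OF sum_hb_in_span that] rpair_antisym[of lam \<eta> \<xi>]
    by (simp add: sharp_\<xi> inner_commute)
  then have "\<xi> = 0"
    using nondeg \<open>\<xi> \<in> h_perp hb\<close> unfolding nondegenerate_at_def by blast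
  then have "(\<Sum>i\<in>UNIV. c$i *\<^sub>R hb i) = 0"
    using sharp_\<xi> by (simp add: sharp_zero)
  then have "c = 0"
    using sum_hb_eq_0_imp by (simp add: vec_eq_iff)
  then show "p = 0"
    using \<open>\<xi> = 0\<close> by (simp add: p zero_prod_def)
qed

lemma bij_Lambda_sharp_iff: "bij (Lambda_sharp hb r lam) \<longleftrightarrow> nondegenerate_at lam"
  using linear_inj_imp_surj[OF linear_Lambda_sharp] nondegenerate_at_if_inj_Lambda_sharp
    inj_Lambda_sharp_if_nondegenerate_at
  unfolding bij_def by blast

lemma pi_form_eq_inner_Lambda_sharp: "pi_form hb r lam \<alpha> \<beta> = Lambda_sharp hb r lam \<alpha> \<bullet> \<beta>"
proof -
  obtain c \<xi> c' \<eta> where \<alpha>\<beta>: "\<alpha> = (c, \<xi>)" "\<beta> = (c', \<eta>)"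
    by fastforce
  have "(\<chi> i. \<xi> \<bullet> hb i) \<bullet> c' = (\<Sum>i\<in>UNIV. (\<xi> \<bullet> hb i) * c'$i)"
    by (simp add: inner_vec_def)
  moreover have "(\<Sum>i\<in>UNIV. c$i *\<^sub>R hb i) \<bullet> \<eta> = (\<Sum>i\<in>UNIV. c$i * (\<eta> \<bullet> hb i))"
    by (simp add: inner_sum_left) (simp add: inner_commute)
  moreover have "Lambda_sharp hb r lam (c, \<xi>) \<bullet> (c', \<eta>)
      = (\<chi> i. \<xi> \<bullet> hb i) \<bullet> c' + (sharp (r lam) \<xi> \<bullet> \<eta> - (\<Sum>i\<in>UNIV. c$i *\<^sub>R hb i) \<bullet> \<eta>)"
    by (simp add: Lambda_sharp_def inner_prod_def istar_def inner_diff_left)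
  ultimately show ?thesis
    by (simp add: \<alpha>\<beta> pi_form_def sharp_inner sum_subtractf)
qed

lemma symplectic_pi_iff: "symplectic_pi hb r \<longleftrightarrow> (\<forall>lam. nondegenerate_at lam)"
proof -
  have "(\<forall>\<beta>. pi_form hb r lam \<alpha> \<beta> = 0) \<longleftrightarrow> Lambda_sharp hb r lam \<alpha> = 0" for lam \<alpha>
    unfolding pi_form_eq_inner_Lambda_sharp by (metis inner_eq_zero_iff inner_zero_left)
  then show ?thesis
    using nondegenerate_at_if_inj_Lambda_sharp inj_Lambda_sharp_if_nondegenerate_at
    unfolding symplectic_pi_def linear_injective_0[OF linear_Lambda_sharp] by blast
qed

section \<open>The rank of \<open>r\<close> is constant\<close>

text \<open>The Gram form of \<open>h\<^sub>1, \<dots>, h\<^sub>l\<close> on the span of \<open>dual_hb\<close> extends \<open>r(\<lambda>)\<close> from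
  \<open>h\<^sup>\<perp>\<close> to all of \<open>g\<^sup>*\<close> without changing nondegeneracy, which then reads \<open>det \<noteq> 0\<close>.\<close>
definition completed_form :: "real^'l \<Rightarrow> real^'n \<Rightarrow> real^'n \<Rightarrow> real" where
  "completed_form lam x y = rpair lam (proj_perp x) (proj_perp y) + (\<Sum>k\<in>UNIV. (x \<bullet> hb k) * (y \<bullet> hb k))"

definition completed_matrix :: "real^'l \<Rightarrow> real^'n^'n" where
  "completed_matrix lam = (\<chi> a b. completed_form lam (axis a 1) (axis b 1))"

lemma linear_completed_form_left: "linear (\<lambda>x. completed_form lam x y)"
  unfolding completed_form_def
  by (rule linearI) (simp_all add: proj_perp_add proj_perp_scaleR sharp_add sharp_scaleR
      algebra_simps sum.distrib sum_distrib_left)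

lemma linear_completed_form_right: "linear (\<lambda>y. completed_form lam x y)"
  unfolding completed_form_def
  by (rule linearI) (simp_all add: proj_perp_add proj_perp_scaleR algebra_simps sum.distrib
      sum_distrib_left)

lemma completed_form_eq_inner: "completed_form lam x y = x \<bullet> (completed_matrix lam *v y)"
proof -
  have "x \<bullet> (completed_matrix lam *v y)
      = (\<Sum>a\<in>UNIV. x$a * (\<Sum>b\<in>UNIV. completed_form lam (axis a 1) (axis b 1) * y$b))"
    by (simp add: completed_matrix_def inner_vec_def matrix_vector_mult_def)
  also have "\<dots> = (\<Sum>a\<in>UNIV. x$a * completed_form lam (axis a 1) y)"
    by (subst (2) linear_eq_sum_axis[OF linear_completed_form_right]) (simp add: mult.commute)
  also have "\<dots> = completed_form lam x y"
    by (subst (2) linear_eq_sum_axis[OF linear_completed_form_left]) simp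
  finally show ?thesis
    by simp
qed

lemma completed_form_h_perp_left: "w \<in> h_perp hb \<Longrightarrow> completed_form lam w y = rpair lam w (proj_perp y)"
  by (simp add: completed_form_def proj_perp_id mem_h_perp)

lemma completed_form_h_perp_right: "w \<in> h_perp hb \<Longrightarrow> completed_form lam x w = rpair lam (proj_perp x) w"
  by (simp add: completed_form_def proj_perp_id mem_h_perp)

lemma completed_form_nondegenerate_iff:
  "(\<forall>y. (\<forall>x. completed_form lam x y = 0) \<longrightarrow> y = 0) \<longleftrightarrow> nondegenerate_at lam"
proof
  assume nondeg_form: "\<forall>y. (\<forall>x. completed_form lam x y = 0) \<longrightarrow> y = 0"
  show "nondegenerate_at lam"
    unfolding nondegenerate_at_def
  proof (intro ballI impI)
    fix \<eta>
    assume "\<eta> \<in> h_perp hb" "\<forall>\<xi>\<in>h_perp hb. rpair lam \<xi> \<eta> = 0"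
    then have "completed_form lam x \<eta> = 0" for x
      using proj_perp_in_h_perp by (simp add: completed_form_h_perp_right)
    then show "\<eta> = 0"
      using nondeg_form by blast
  qed
next
  assume nondeg: "nondegenerate_at lam"
  show "\<forall>y. (\<forall>x. completed_form lam x y = 0) \<longrightarrow> y = 0"
  proof (intro allI impI)
    fix y
    assume orth: "\<forall>x. completed_form lam x y = 0"
    then have "rpair lam \<xi> (proj_perp y) = 0" if "\<xi> \<in> h_perp hb" for \<xi>
      using that by (metis completed_form_h_perp_left)
    then have "proj_perp y = 0"
      using nondeg proj_perp_in_h_perp unfolding nondegenerate_at_def by blast
    moreover have "y \<bullet> hb m = 0" for m
    proof -
      have "(\<Sum>k\<in>UNIV. (dual_hb m \<bullet> hb k) * (y \<bullet> hb k)) = (\<Sum>k\<in>UNIV. if k = m then y \<bullet> hb k else 0)"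
        by (rule sum.cong) (auto simp: inner_dual_hb)
      then have "(\<Sum>k\<in>UNIV. (dual_hb m \<bullet> hb k) * (y \<bullet> hb k)) = y \<bullet> hb m"
        by simp
      then show ?thesis
        using orth[rule_format, of "dual_hb m"] \<open>proj_perp y = 0\<close>
        by (simp add: completed_form_def sharp_zero)
    qed
    ultimately show "y = 0"
      using proj_perp_id by (simp add: mem_h_perp)
  qed
qed

lemma det_completed_matrix_nonzero_iff: "det (completed_matrix lam) \<noteq> 0 \<longleftrightarrow> nondegenerate_at lam"
proof -
  have "det (completed_matrix lam) \<noteq> 0 \<longleftrightarrow> (\<forall>y. completed_matrix lam *v y = 0 \<longrightarrow> y = 0)"
    using det_nz_iff_inj[OF matrix_vector_mul_linear[of "completed_matrix lam"]]
      linear_injective_0[OF matrix_vector_mul_linear[of "completed_matrix lam"]]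
    by simp
  also have "\<dots> \<longleftrightarrow> (\<forall>y. (\<forall>x. completed_form lam x y = 0) \<longrightarrow> y = 0)"
    unfolding completed_form_eq_inner by (metis inner_eq_zero_iff inner_zero_right)
  finally show ?thesis
    using completed_form_nondegenerate_iff by simp
qed

definition restricted_matrix :: "real^'n^'n \<Rightarrow> real^'n^'n" where
  "restricted_matrix \<rho> = (\<chi> a b. sharp \<rho> (proj_perp (axis a 1)) \<bullet> proj_perp (axis b 1))"

definition hb_gram :: "real^'n^'n" where
  "hb_gram = (\<chi> a b. \<Sum>k\<in>UNIV. (axis a 1 \<bullet> hb k) * (axis b 1 \<bullet> hb k))"

lemma completed_matrix_eq: "completed_matrix lam = restricted_matrix (r lam) + hb_gram"
  by (simp add: completed_matrix_def restricted_matrix_def hb_gram_def completed_form_def vec_eq_iff)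

lemma bounded_linear_restricted_matrix: "bounded_linear restricted_matrix"
proof -
  have "linear restricted_matrix"
    unfolding restricted_matrix_def
    by (rule linearI) (simp_all add: vec_eq_iff sharp_add_bivector sharp_scaleR_bivector inner_add_left)
  then show ?thesis
    using linear_conv_bounded_linear by blast
qed

lemma ad_transpose_add_left: "ad_transpose br (p + q) \<xi> = ad_transpose br p \<xi> + ad_transpose br q \<xi>"
  unfolding ad_transpose_def by (simp add: vec_eq_iff linear_add[OF linear_br_left] inner_add_right)

lemma ad_transpose_scaleR_left: "ad_transpose br (c *\<^sub>R p) \<xi> = c *\<^sub>R ad_transpose br p \<xi>"
  unfolding ad_transpose_def by (simp add: vec_eq_iff linear_scale[OF linear_br_left])

definition det_rate :: "real^'n \<Rightarrow> real^'n^'n \<Rightarrow> real" where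
  "det_rate \<theta> \<rho> = (\<Sum>a\<in>UNIV. deriv_left \<rho> \<theta> (proj_perp (axis a 1)) $ a
      + deriv_right \<rho> \<theta> (proj_perp (axis a 1)) $ a)"

lemma bounded_linear_det_rate: "bounded_linear (det_rate \<theta>)"
proof -
  have "linear (det_rate \<theta>)"
    unfolding det_rate_def deriv_left_def deriv_right_def
    by (rule linearI) (simp_all add: sharp_add_bivector sharp_scaleR_bivector ad_transpose_add_left
        ad_transpose_scaleR_left proj_perp_add proj_perp_scaleR proj_perp_minus sum.distrib sum_subtractf scaleR_sum_right algebra_simps sum_distrib_left)
  then show ?thesis
    using linear_conv_bounded_linear by blast
qed

lemma restricted_matrix_dr:
  "restricted_matrix (dr lam w)
    = transpose (matrix (\<lambda>x. deriv_left (r lam) (dual_vec w) (proj_perp x))) ** completed_matrix lam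
      + completed_matrix lam ** matrix (\<lambda>x. deriv_right (r lam) (dual_vec w) (proj_perp x))"
proof -
  let ?A = "\<lambda>x. deriv_left (r lam) (dual_vec w) (proj_perp x)"
  let ?B = "\<lambda>x. deriv_right (r lam) (dual_vec w) (proj_perp x)"
  have "restricted_matrix (dr lam w) $ a $ b
      = (transpose (matrix ?A) ** completed_matrix lam + completed_matrix lam ** matrix ?B) $ a $ b"
    for a b
  proof -
    have "(transpose (matrix ?A) ** completed_matrix lam) $ a $ b
        = completed_form lam (?A (axis a 1)) (axis b 1)"
      by (simp add: matrix_matrix_mult_def transpose_def matrix_def completed_matrix_def
          linear_eq_sum_axis[OF linear_completed_form_left[of lam "axis b 1"], of "?A (axis a 1)"])
    moreover have "(completed_matrix lam ** matrix ?B) $ a $ b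
        = completed_form lam (axis a 1) (?B (axis b 1))"
      by (simp add: matrix_matrix_mult_def matrix_def completed_matrix_def mult.commute
          linear_eq_sum_axis[OF linear_completed_form_right[of lam "axis a 1"], of "?B (axis b 1)"])
    ultimately show ?thesis
      using dr_h_perp[OF proj_perp_in_h_perp proj_perp_in_h_perp, of lam w "axis a 1" "axis b 1"]
      by (simp add: restricted_matrix_def sharp_inner completed_form_h_perp_left[OF deriv_left_in_h_perp]
          completed_form_h_perp_right[OF deriv_right_in_h_perp])
  qed
  then show ?thesis
    by (simp add: vec_eq_iff)
qed

lemma has_real_derivative_det_completed_matrix:
  "((\<lambda>t. det (completed_matrix (lam0 + t *\<^sub>R w))) has_real_derivative
      det_rate (dual_vec w) (r (lam0 + t *\<^sub>R w)) * det (completed_matrix (lam0 + t *\<^sub>R w))) (at t)"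
proof -
  let ?g = "lam0 + t *\<^sub>R w"
  have "((\<lambda>t. r (lam0 + t *\<^sub>R w)) has_derivative (\<lambda>s. dr ?g (s *\<^sub>R w))) (at t)"
    by (rule has_derivative_compose[OF _ has_derivative_r]) (auto intro!: derivative_eq_intros)
  then have "((\<lambda>t. completed_matrix (lam0 + t *\<^sub>R w)) has_derivative
      (\<lambda>s. restricted_matrix (dr ?g (s *\<^sub>R w)))) (at t)"
    unfolding completed_matrix_eq
    by (intro has_derivative_add_const bounded_linear.has_derivative[OF bounded_linear_restricted_matrix])
  then have "((\<lambda>t. det (completed_matrix (lam0 + t *\<^sub>R w))) has_derivative
      (\<lambda>s. det_deriv (completed_matrix ?g) (restricted_matrix (dr ?g (s *\<^sub>R w))))) (at t)"
    by (rule has_derivative_compose[OF _ has_derivative_det])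
  moreover have "det_deriv (completed_matrix ?g) (restricted_matrix (dr ?g (s *\<^sub>R w)))
      = det_rate (dual_vec w) (r ?g) * det (completed_matrix ?g) * s" for s
  proof -
    have "det_deriv (completed_matrix ?g) (restricted_matrix (dr ?g (s *\<^sub>R w)))
        = s * det_deriv (completed_matrix ?g) (restricted_matrix (dr ?g w))"
      using linear_scale[OF linear_dr, of ?g s w]
        linear_scale[OF bounded_linear.linear[OF bounded_linear_restricted_matrix]]
        linear_scale[OF linear_det_deriv]
      by simp
    also have "det_deriv (completed_matrix ?g) (restricted_matrix (dr ?g w))
        = det_rate (dual_vec w) (r ?g) * det (completed_matrix ?g)"
      unfolding restricted_matrix_dr linear_add[OF linear_det_deriv] det_deriv_mult_left
        det_deriv_mult_right trace_transpose trace_matrix det_rate_def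
      by (simp add: sum.distrib algebra_simps)
    finally show ?thesis
      by simp
  qed
  ultimately show ?thesis
    by (simp add: has_field_derivative_def)
qed

lemma nondegenerate_at_propagates:
  assumes "nondegenerate_at lam0"
  shows "nondegenerate_at lam1"
proof -
  define w where "w = lam1 - lam0"
  define f where "f t = det (completed_matrix (lam0 + t *\<^sub>R w))" for t
  define c where "c t = det_rate (dual_vec w) (r (lam0 + t *\<^sub>R w))" for t
  have "(f has_real_derivative c t * f t) (at t)" for t
    unfolding f_def c_def by (rule has_real_derivative_det_completed_matrix)
  moreover have "continuous_on {0..1} c"
    unfolding c_def
    by (intro continuous_on_compose2[OF linear_continuous_on[OF bounded_linear_det_rate]]
        continuous_on_compose2[OF continuous_r] continuous_intros) auto
  moreover have "f 0 \<noteq> 0"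
    using assms by (simp add: f_def det_completed_matrix_nonzero_iff)
  ultimately have "f 1 \<noteq> 0"
    by (intro linear_ode_nonzero[of 0 1 f c]) auto
  then show ?thesis
    by (simp add: f_def w_def det_completed_matrix_nonzero_iff)
qed

end

theorem corollary2p5:
  fixes br :: "real^'n \<Rightarrow> real^'n \<Rightarrow> real^'n"
    and hb :: "'l::finite \<Rightarrow> real^'n"
    and r :: "real^'l \<Rightarrow> real^'n^'n"
  assumes "lie_algebra br"
    and "abelian_subalg_basis br hb"
    and "triangular_dyn_rmatrix br hb r"
  shows "((\<exists>lam. g_lambda hb r lam = UNIV) \<longleftrightarrow> (\<forall>lam. bij (Lambda_sharp hb r lam)))
       \<and> ((\<forall>lam. bij (Lambda_sharp hb r lam)) \<longleftrightarrow> (\<forall>lam. g_lambda hb r lam = UNIV))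
       \<and> ((\<forall>lam. g_lambda hb r lam = UNIV) \<longleftrightarrow> symplectic_pi hb r)"
proof -
  interpret triangular_dynamical_r_matrix br hb r
    using assms by unfold_locales
  have "(\<exists>lam. nondegenerate_at lam) \<longleftrightarrow> (\<forall>lam. nondegenerate_at lam)"
    using nondegenerate_at_propagates by blast
  then show ?thesis
    unfolding g_lambda_eq_UNIV_iff bij_Lambda_sharp_iff symplectic_pi_iff by blast
qed

end
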